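(* Let $a,b,c$ be positive integers such that $abc$ is not a cube in $\mathbb{Z}$. Then there exists $\lambda\in\{a/b,\,b/c,\,c/a\}$ such that $\mathbb{Q}(\sqrt[3]{abc})\neq\mathbb{Q}(\sqrt[3]{\lambda})$.
   Context: $\sqrt[3]{\cdot}$ denotes the real cube root, so these are subfields of $\mathbb{R}$. *)

theory Defs
  imports Complex_Main
begin

definition real_subfield :: "real set \<Rightarrow> bool" where
  "real_subfield K \<longleftrightarrow> 0 \<in> K \<and> 1 \<in> K \<and>
     (\<forall>x\<in>K. \<forall>y\<in>K. x + y \<in> K \<and> x - y \<in> K \<and> x * y \<in> K) \<and>
     (\<forall>x\<in>K. x \<noteq> 0 \<longrightarrow> inverse x \<in> K)"

definition Q_adjoin :: "real \<Rightarrow> real set" where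
  "Q_adjoin \<alpha> = \<Inter>{K. real_subfield K \<and> \<alpha> \<in> K}"

end

theory Submission
  imports Defs
begin

text \<open>Put N = abc and t = root 3 N. As N is not a rational cube, 1, t, t^2 are linearly
  independent over the rationals and their rational span is already a field, hence contains
  Q(t). If Q(t) = Q(p) with p = root 3 \<lambda> and \<lambda> rational, then p is an irrational element of
  this span with rational cube; comparing coefficients of p^3 in the basis 1, t, t^2 shows
  that p is a rational multiple of t or of t^2, i.e. \<lambda> is N or N^2 up to a rational cube.
  If this held for all of a/b, b/c, c/a, two of them would lie in the same class, and their
  quotient, e.g. (a/b)/(b/c) = N/b^3, would be a rational cube; then so would be N.\<close>

definition rat_cube :: "real \<Rightarrow> bool" where
  "rat_cube r \<longleftrightarrow> (\<exists>q\<in>\<rat>. r = q ^ 3)"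

lemma rat_cube_power3 [intro]: "q \<in> \<rat> \<Longrightarrow> rat_cube (q ^ 3)"
  unfolding rat_cube_def by blast

lemma rat_cube_mult: "rat_cube r \<Longrightarrow> rat_cube s \<Longrightarrow> rat_cube (r * s)"
  unfolding rat_cube_def by (metis Rats_mult power_mult_distrib)

lemma rat_cube_divide: "rat_cube r \<Longrightarrow> rat_cube s \<Longrightarrow> rat_cube (r / s)"
  unfolding rat_cube_def by (metis Rats_divide power_divide)

lemma not_rat_cube_nonzero: "\<not> rat_cube N \<Longrightarrow> N \<noteq> 0"
  using rat_cube_power3[of 0] by auto

lemma rat_cube_divide_same_power:
  assumes "rat_cube (r / N ^ e)" "rat_cube (s / N ^ e)" "N \<noteq> 0"
  shows "rat_cube (r / s)"
  using rat_cube_divide[OF assms(1,2)] assms(3) by simp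

lemma rat_cube_of_int_imp_cube:
  assumes "rat_cube (of_int n)"
  shows "\<exists>m. n = m ^ 3"
proof -
  obtain r where r: "r \<in> \<rat>" "real_of_int n = r ^ 3"
    using assms unfolding rat_cube_def by blast
  obtain p q where pq: "q > 0" "coprime p q" "r = of_int p / of_int q"
    using Rats_cases'[OF r(1)] by blast
  have "real_of_int (n * q ^ 3) = of_int (p ^ 3)"
    using r(2) pq(1,3) by (simp add: power_divide)
  then have npq: "n * q ^ 3 = p ^ 3"
    by linarith
  then have "q ^ 3 dvd p ^ 3"
    by (metis dvd_triv_right)
  moreover have "coprime (q ^ 3) (p ^ 3)"
    using pq(2) by (simp add: coprime_commute)
  ultimately have "is_unit q"
    by (simp add: coprime_absorb_left)
  then have "q = 1"
    using pq(1) by auto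
  then show ?thesis
    using npq by auto
qed

lemma cbrt_not_rational: "t ^ 3 = N \<Longrightarrow> \<not> rat_cube N \<Longrightarrow> t \<notin> \<rat>"
  by blast

lemma Rats_eq_mult_irrational_imp_zero:
  assumes "t \<notin> \<rat>" "x \<in> \<rat>" "y \<in> \<rat>" "x = y * t"
  shows "x = 0 \<and> y = 0"
proof (cases "y = 0")
  case False
  then have "t = x / y"
    using assms(4) by simp
  then show ?thesis
    using assms(1-3) by simp
qed (use assms in simp)

lemma Q_adjoin_mem: "\<alpha> \<in> Q_adjoin \<alpha>"
  unfolding Q_adjoin_def by blast

lemma Q_adjoin_least: "real_subfield K \<Longrightarrow> \<alpha> \<in> K \<Longrightarrow> Q_adjoin \<alpha> \<subseteq> K"
  unfolding Q_adjoin_def by blast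

lemma real_subfield_Rats: "real_subfield \<rat>"
  unfolding real_subfield_def by auto

definition rat_span_1_t_t2 :: "real \<Rightarrow> real set" where
  "rat_span_1_t_t2 t = {x + y * t + z * t ^ 2 | x y z. x \<in> \<rat> \<and> y \<in> \<rat> \<and> z \<in> \<rat>}"

lemma rat_span_1_t_t2_memI:
  "x \<in> \<rat> \<Longrightarrow> y \<in> \<rat> \<Longrightarrow> z \<in> \<rat> \<Longrightarrow> x + y * t + z * t ^ 2 \<in> rat_span_1_t_t2 t"
  unfolding rat_span_1_t_t2_def by blast

lemma rat_span_1_t_t2_memE:
  assumes "u \<in> rat_span_1_t_t2 t"
  obtains x y z where "x \<in> \<rat>" "y \<in> \<rat>" "z \<in> \<rat>" "u = x + y * t + z * t ^ 2"
  using assms unfolding rat_span_1_t_t2_def by blast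

lemma cbrt_powers_independent:
  assumes t: "t ^ 3 = N" "N \<in> \<rat>" "\<not> rat_cube N"
    and xyz: "x \<in> \<rat>" "y \<in> \<rat>" "z \<in> \<rat>"
    and zero: "x + y * t + z * t ^ 2 = 0"
  shows "x = 0 \<and> y = 0 \<and> z = 0"
proof -
  have t_irrat: "t \<notin> \<rat>"
    using cbrt_not_rational t by blast
  show ?thesis
  proof (cases "z = 0")
    case True
    then have "x + y * t = 0"
      using zero by simp
    then have "- x = y * t"
      by simp
    then have "y = 0"
      using Rats_eq_mult_irrational_imp_zero[OF t_irrat] xyz by (meson Rats_minus_iff)
    then show ?thesis
      using True zero by simp
  next
    case False
    \<comment> \<open>eliminating t^2 with the help of t^3 = N leaves a rational linear relation for t\<close>
    have "z * ((y^2 - x*z) * t - (N * z^2 - x*y)) = 0"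
      using zero t(1) by algebra
    then have lin: "(y^2 - x*z) * t = N * z^2 - x*y"
      using False by simp
    show ?thesis
    proof (cases "y^2 - x*z = 0")
      case True
      then have "N * z^3 = y^3"
        using lin by algebra
      then have "N = (y / z) ^ 3"
        using False by (simp add: field_simps)
      then show ?thesis
        using t(3) xyz by auto
    next
      case False
      then have "t = (N * z^2 - x*y) / (y^2 - x*z)"
        using lin by (simp add: field_simps)
      then show ?thesis
        using t_irrat t(2) xyz by simp
    qed
  qed
qed

lemma rat_span_1_t_t2_mult:
  assumes t: "t ^ 3 = N" "N \<in> \<rat>"
    and "u \<in> rat_span_1_t_t2 t" "v \<in> rat_span_1_t_t2 t"
  shows "u * v \<in> rat_span_1_t_t2 t"
proof -
  obtain x y z where u: "x \<in> \<rat>" "y \<in> \<rat>" "z \<in> \<rat>" "u = x + y * t + z * t ^ 2"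
    using assms(3) by (rule rat_span_1_t_t2_memE)
  obtain x' y' z' where v: "x' \<in> \<rat>" "y' \<in> \<rat>" "z' \<in> \<rat>" "v = x' + y' * t + z' * t ^ 2"
    using assms(4) by (rule rat_span_1_t_t2_memE)
  have "u * v = (x*x' + N*(y*z' + z*y')) + (x*y' + y*x' + N*z*z') * t + (x*z' + y*y' + z*x') * t^2"
    using u(4) v(4) t(1) by algebra
  then show ?thesis
    using u v t(2) by (simp add: rat_span_1_t_t2_memI)
qed

lemma rat_span_1_t_t2_inverse:
  assumes t: "t ^ 3 = N" "N \<in> \<rat>" "\<not> rat_cube N"
    and "u \<in> rat_span_1_t_t2 t" "u \<noteq> 0"
  shows "inverse u \<in> rat_span_1_t_t2 t"
proof -
  obtain x y z where xyz: "x \<in> \<rat>" "y \<in> \<rat>" "z \<in> \<rat>" and u: "u = x + y * t + z * t ^ 2"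
    using assms(4) by (rule rat_span_1_t_t2_memE)
  \<comment> \<open>D is the norm of u, and u * P = D with P the product of the two conjugates of u;
      over the reals, P = 0 forces the three summands of u to coincide\<close>
  define D where "D = x^3 + N*y^3 + N^2*z^3 - 3*N*x*y*z"
  define P where "P = (x^2 - N*y*z) + (N*z^2 - x*y) * t + (y^2 - x*z) * t^2"
  have "u * P = D"
    unfolding u P_def D_def t(1)[symmetric] by algebra
  moreover have "P \<noteq> 0"
  proof
    assume "P = 0"
    then have "(x - y*t)^2 + (y*t - z*t^2)^2 + (z*t^2 - x)^2 = 0"
      unfolding P_def t(1)[symmetric] by algebra
    then have "x = y * t" "y * t = z * t^2"
      by (smt (verit) sum_power2_eq_zero_iff zero_le_power2)+
    moreover have "t \<notin> \<rat>"
      using cbrt_not_rational t(1,3) by blast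
    ultimately have "x = 0" "y = 0"
      using Rats_eq_mult_irrational_imp_zero xyz by blast+
    then show False
      using \<open>y * t = z * t^2\<close> u assms(5) by simp
  qed
  ultimately have "inverse u = P / D"
    using assms(5) by (auto simp: field_simps)
  also have "\<dots> = (x^2 - N*y*z) / D + ((N*z^2 - x*y) / D) * t + ((y^2 - x*z) / D) * t^2"
    unfolding P_def by (simp add: add_divide_distrib diff_divide_distrib algebra_simps)
  finally have inverse_u:
    "inverse u = (x^2 - N*y*z) / D + ((N*z^2 - x*y) / D) * t + ((y^2 - x*z) / D) * t^2" .
  have "D \<in> \<rat>"
    using xyz t(2) unfolding D_def by simp
  then show ?thesis
    unfolding inverse_u using xyz t(2) by (intro rat_span_1_t_t2_memI) simp_all
qed

lemma real_subfield_rat_span_1_t_t2: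
  assumes "t ^ 3 = N" "N \<in> \<rat>" "\<not> rat_cube N"
  shows "real_subfield (rat_span_1_t_t2 t)"
proof -
  have "0 \<in> rat_span_1_t_t2 t" "1 \<in> rat_span_1_t_t2 t"
    using rat_span_1_t_t2_memI[of _ 0 0 t] by auto
  moreover have "u + v \<in> rat_span_1_t_t2 t \<and> u - v \<in> rat_span_1_t_t2 t"
    if u_mem: "u \<in> rat_span_1_t_t2 t" and v_mem: "v \<in> rat_span_1_t_t2 t" for u v
  proof -
    obtain x y z where u: "x \<in> \<rat>" "y \<in> \<rat>" "z \<in> \<rat>" "u = x + y * t + z * t ^ 2"
      using u_mem by (rule rat_span_1_t_t2_memE)
    obtain x' y' z' where v: "x' \<in> \<rat>" "y' \<in> \<rat>" "z' \<in> \<rat>" "v = x' + y' * t + z' * t ^ 2"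
      using v_mem by (rule rat_span_1_t_t2_memE)
    show ?thesis
      using u v rat_span_1_t_t2_memI[of "x + x'" "y + y'" "z + z'" t]
        rat_span_1_t_t2_memI[of "x - x'" "y - y'" "z - z'" t]
      by (simp add: algebra_simps)
  qed
  ultimately show ?thesis
    unfolding real_subfield_def
    using rat_span_1_t_t2_mult[OF assms(1,2)] rat_span_1_t_t2_inverse[OF assms] by blast
qed

lemma rat_cube_in_rat_span_1_t_t2:
  assumes t: "t ^ 3 = N" "N \<in> \<rat>" "\<not> rat_cube N"
    and p: "p \<in> rat_span_1_t_t2 t" "p ^ 3 \<in> \<rat>"
  shows "\<exists>q\<in>\<rat>. p = q \<or> p = q * t \<or> p = q * t ^ 2"
proof -
  have "N \<noteq> 0"
    using t(3) by (rule not_rat_cube_nonzero)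
  obtain x y z where xyz: "x \<in> \<rat>" "y \<in> \<rat>" "z \<in> \<rat>" and p_eq: "p = x + y * t + z * t ^ 2"
    using p(1) by (rule rat_span_1_t_t2_memE)
  define c1 where "c1 = 3 * (x^2*y + N*x*z^2 + N*y^2*z)"
  define c2 where "c2 = 3 * (x^2*z + x*y^2 + N*y*z^2)"
  have "(x^3 + N*y^3 + N^2*z^3 + 6*N*x*y*z - p^3) + c1 * t + c2 * t^2 = 0"
    unfolding c1_def c2_def p_eq t(1)[symmetric] by algebra
  then have "c1 = 0" "c2 = 0"
    using cbrt_powers_independent[OF t] xyz t(2) p(2) unfolding c1_def c2_def
    by (metis Rats_add Rats_diff Rats_mult Rats_number_of Rats_power)+
  then have c1: "x^2*y + N*x*z^2 + N*y^2*z = 0" and c2: "x^2*z + x*y^2 + N*y*z^2 = 0"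
    unfolding c1_def c2_def by simp_all
  have "(y = 0 \<and> z = 0) \<or> (x = 0 \<and> z = 0) \<or> (x = 0 \<and> y = 0)"
  proof (cases "x = 0 \<or> y = 0 \<or> z = 0")
    case True
    then show ?thesis
      using c1 \<open>N \<noteq> 0\<close> by auto
  next
    case False
    have "x * (N * z^3 - y^3) = z * (x^2*y + N*x*z^2 + N*y^2*z) - y * (x^2*z + x*y^2 + N*y*z^2)"
      by algebra
    then have "N * z^3 = y^3"
      using c1 c2 False by simp
    then have "N = (y / z) ^ 3"
      using False by (simp add: field_simps)
    then show ?thesis
      using t(3) xyz by auto
  qed
  then show ?thesis
    using xyz p_eq by auto
qed

lemma Q_adjoin_cbrt_eq_imp_rat_cube:
  assumes "N \<in> \<rat>" "l \<in> \<rat>" "\<not> rat_cube N"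
    and eq: "Q_adjoin (root 3 N) = Q_adjoin (root 3 l)"
  shows "\<exists>e\<in>{1, 2::nat}. rat_cube (l / N ^ e)"
proof -
  define t where "t = root 3 N"
  define p where "p = root 3 l"
  have t3: "t ^ 3 = N" and p3: "p ^ 3 = l"
    unfolding t_def p_def by (simp_all add: odd_real_root_pow)
  have "N \<noteq> 0"
    using assms(3) by (rule not_rat_cube_nonzero)
  have "p \<in> Q_adjoin t"
    using eq Q_adjoin_mem[of p] unfolding t_def p_def by simp
  also have "Q_adjoin t \<subseteq> rat_span_1_t_t2 t"
    using Q_adjoin_least real_subfield_rat_span_1_t_t2[OF t3 assms(1,3)]
      rat_span_1_t_t2_memI[of 0 1 0 t] by simp
  finally obtain q where q: "q \<in> \<rat>" "p = q \<or> p = q * t \<or> p = q * t ^ 2"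
    using rat_cube_in_rat_span_1_t_t2[OF t3 assms(1,3)] p3 assms(2) by blast
  have "p \<notin> \<rat>"
  proof
    assume "p \<in> \<rat>"
    then have "Q_adjoin p \<subseteq> \<rat>"
      by (rule Q_adjoin_least[OF real_subfield_Rats])
    then have "t \<in> \<rat>"
      using eq Q_adjoin_mem[of t] unfolding t_def p_def by auto
    then show False
      using cbrt_not_rational t3 assms(3) by blast
  qed
  then have "l / N = q ^ 3 \<or> l / N ^ 2 = q ^ 3"
    using q \<open>N \<noteq> 0\<close> unfolding p3[symmetric] t3[symmetric]
    by (auto simp: power_mult_distrib simp flip: power_mult)
  then show ?thesis
    using q(1) by auto
qed

lemma Q_adjoin_cbrt_ne_for_some_ratio:
  fixes a b c :: real
  assumes rat: "a \<in> \<rat>" "b \<in> \<rat>" "c \<in> \<rat>" and not_cube: "\<not> rat_cube (a * b * c)"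
  shows "\<exists>l\<in>{a / b, b / c, c / a}. Q_adjoin (root 3 (a * b * c)) \<noteq> Q_adjoin (root 3 l)"
proof (rule ccontr)
  define N where "N = a * b * c"
  assume "\<not> ?thesis"
  then have cube_class: "\<exists>e\<in>{1, 2::nat}. rat_cube (l / N ^ e)"
    if "l \<in> {a / b, b / c, c / a}" for l
    using Q_adjoin_cbrt_eq_imp_rat_cube[of N l] that rat not_cube unfolding N_def by auto
  obtain e1 where e1: "e1 \<in> {1, 2::nat}" "rat_cube ((a / b) / N ^ e1)"
    using cube_class by blast
  obtain e2 where e2: "e2 \<in> {1, 2::nat}" "rat_cube ((b / c) / N ^ e2)"
    using cube_class by blast
  obtain e3 where e3: "e3 \<in> {1, 2::nat}" "rat_cube ((c / a) / N ^ e3)"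
    using cube_class by blast
  have "N \<noteq> 0"
    using not_cube unfolding N_def by (rule not_rat_cube_nonzero)
  then have nonzero: "a \<noteq> 0" "b \<noteq> 0" "c \<noteq> 0"
    unfolding N_def by auto
  have "e1 = e2 \<or> e2 = e3 \<or> e3 = e1"
    using e1(1) e2(1) e3(1) by auto
  then have "rat_cube ((a / b) / (b / c)) \<or> rat_cube ((b / c) / (c / a))
      \<or> rat_cube ((c / a) / (a / b))"
    using rat_cube_divide_same_power \<open>N \<noteq> 0\<close> e1(2) e2(2) e3(2) by metis
  moreover have "(a / b) / (b / c) = N / b ^ 3" "(b / c) / (c / a) = N / c ^ 3"
    "(c / a) / (a / b) = N / a ^ 3"
    unfolding N_def using nonzero by (simp_all add: field_simps power3_eq_cube)
  ultimately obtain q where "q \<in> \<rat>" "q \<noteq> 0" "rat_cube (N / q ^ 3)"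
    using rat nonzero by auto
  then have "rat_cube (N / q ^ 3 * q ^ 3)"
    by (intro rat_cube_mult rat_cube_power3)
  then show False
    using \<open>q \<noteq> 0\<close> not_cube unfolding N_def by simp
qed

theorem lemma4p5:
  fixes a b c :: int
  assumes "a > 0" and "b > 0" and "c > 0"
    and "\<not> (\<exists>n::int. a * b * c = n ^ 3)"
  shows "\<exists>l \<in> {real_of_int a / real_of_int b, real_of_int b / real_of_int c,
                    real_of_int c / real_of_int a}.
           Q_adjoin (root 3 (real_of_int (a * b * c))) \<noteq> Q_adjoin (root 3 l)"
proof -
  have "\<not> rat_cube (real_of_int a * real_of_int b * real_of_int c)"
    using rat_cube_of_int_imp_cube[of "a * b * c"] assms(4) by auto
  then show ?thesis
    using Q_adjoin_cbrt_ne_for_some_ratio[of "real_of_int a" "real_of_int b" "real_of_int c"]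
    by simp
qed

end
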